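(* Let $A$ be a real $n\times n$ matrix and $\mathbf{c},\mathbf{d}\in\mathbb{R}^n$ with $A+A^T=\mathbf{c}\mathbf{d}^T$, let $K=A-\tfrac12\mathbf{c}\mathbf{d}^T$, $d_{\min}=\min_id_i$, $d_{\max}=\max_id_i$, and define the correspondence $F$ on $[d_{\min},d_{\max}]$ by \[ F(\lambda)=\{\mathbf{d}^T\mathbf{x}:\ (\mathbf{x},\pi)\text{ is an optimal solution of }LP(\lambda)\text{ for some }\pi\in\mathbb{R}\}. \] Then: (i) for every $\lambda\in[d_{\min},d_{\max}]$, $F(\lambda)$ is a nonempty convex subset of $[d_{\min},d_{\max}]$; (ii) if $\lambda\in[d_{\min},d_{\max}]$ and $(\mathbf{x},\pi)$ is an optimal solution of $LP(\lambda)$ with $\mathbf{d}^T\mathbf{x}=\lambda$, then $\mathbf{x}$ is a symmetric Nash equilibrium of $(A,A^T)$; (iii) if $\mathbf{x}$ is a symmetric Nash equilibrium of $(A,A^T)$, then $\lambda=\mathbf{d}^T\mathbf{x}$ lies in $[d_{\min},d_{\max}]$ and $\lambda\in F(\lambda)$. Consequently the fixed points of $F$ are exactly the values $\mathbf{d}^T\mathbf{x}$ for symmetric Nash equilibria $\mathbf{x}$ of $(A,A^T)$.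
   Context: For fixed $\lambda\in\mathbb{R}$, $LP(\lambda)$ is the linear program in variables $\mathbf{x}\in\mathbb{R}^n,\pi\in\mathbb{R}$: maximize $\tfrac12\lambda\,\mathbf{x}^T\mathbf{c}-\pi$ subject to $K\mathbf{x}+\tfrac{\lambda}{2}\mathbf{c}\le\pi\mathbf{1}$ (componentwise), $\mathbf{x}\ge0$, $\sum_ix_i=1$; $\mathbf{1}$ is the all-ones vector. A probability vector $\mathbf{x}$ is a symmetric Nash equilibrium of $(A,A^T)$ if $(\mathbf{x},\mathbf{x})$ is a Nash equilibrium, equivalently, $x_i>0$ implies $(A\mathbf{x})_i=\max_k(A\mathbf{x})_k$. *)

theory Defs
  imports "HOL-Analysis.Analysis"
begin

definition outer :: "real^'n \<Rightarrow> real^'n \<Rightarrow> real^'n^'n" where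
  "outer c d = (\<chi> i j. c $ i * d $ j)"

definition is_prob :: "real^'n \<Rightarrow> bool" where
  "is_prob x \<longleftrightarrow> (\<forall>i. 0 \<le> x $ i) \<and> sum (\<lambda>i. x $ i) UNIV = 1"

definition lp_feasible :: "real^'n^'n \<Rightarrow> real^'n \<Rightarrow> real \<Rightarrow> real^'n \<Rightarrow> real \<Rightarrow> bool" where
  "lp_feasible K c lam x pp \<longleftrightarrow>
     (\<forall>i. (K *v x) $ i + lam / 2 * c $ i \<le> pp) \<and> is_prob x"

definition lp_objective :: "real^'n \<Rightarrow> real \<Rightarrow> real^'n \<Rightarrow> real \<Rightarrow> real" where
  "lp_objective c lam x pp = 1/2 * lam * (x \<bullet> c) - pp"

definition lp_optimal :: "real^'n^'n \<Rightarrow> real^'n \<Rightarrow> real \<Rightarrow> real^'n \<Rightarrow> real \<Rightarrow> bool" where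
  "lp_optimal K c lam x pp \<longleftrightarrow> lp_feasible K c lam x pp \<and>
     (\<forall>y rr. lp_feasible K c lam y rr \<longrightarrow> lp_objective c lam y rr \<le> lp_objective c lam x pp)"

definition corrF :: "real^'n^'n \<Rightarrow> real^'n \<Rightarrow> real^'n \<Rightarrow> real \<Rightarrow> real set" where
  "corrF K c d lam = {d \<bullet> x | x. \<exists>pp. lp_optimal K c lam x pp}"

definition sym_nash :: "real^'n^'n \<Rightarrow> real^'n \<Rightarrow> bool" where
  "sym_nash A x \<longleftrightarrow> is_prob x \<and>
     (\<forall>i. 0 < x $ i \<longrightarrow> (A *v x) $ i = (MAX k. (A *v x) $ k))"

end

theory Submission
  imports Defs
begin

text \<open>Since \<open>A + A\<^sup>T = c d\<^sup>T\<close>, the matrix \<open>K\<close> is skew-symmetric, so \<open>x\<^sup>T K x = 0\<close>.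
  Averaging the constraints of \<open>LP(\<lambda>)\<close> with the weights \<open>x\<close> then shows that every feasible
  \<open>(x, \<pi>)\<close> has objective value at most 0, and Nash's fixed-point argument applied to the payoffs
  \<open>K x + \<lambda>/2 c\<close> produces a feasible point of value 0. Hence the optimal solutions are the
  feasible pairs with \<open>\<pi> = \<lambda>/2 x\<^sup>T c\<close>; they form a polyhedron, and \<open>F(\<lambda>)\<close> is its image under
  \<open>x \<mapsto> d\<^sup>T x\<close>. At \<open>\<lambda> = d\<^sup>T x\<close> one has \<open>A x = K x + \<lambda>/2 c\<close> and \<open>x\<^sup>T A x = \<pi>\<close>, so the
  constraints say exactly that no pure strategy does better against \<open>x\<close> than \<open>x\<close> itself.\<close>

lemma outer_mult_vec: "outer c d *v x = (d \<bullet> x) *\<^sub>R c"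
  by (simp add: vec_eq_iff outer_def matrix_vector_mult_def inner_vec_def sum_distrib_left mult_ac)

lemma is_prob_inner_le:
  assumes "is_prob x" "\<And>i. w $ i \<le> p"
  shows "x \<bullet> w \<le> p"
proof -
  have "x \<bullet> w = (\<Sum>i\<in>UNIV. x$i * w$i)" by (simp add: inner_vec_def)
  also have "\<dots> \<le> (\<Sum>i\<in>UNIV. x$i * p)"
    using assms by (intro sum_mono mult_left_mono) (auto simp: is_prob_def)
  also have "\<dots> = p" using assms by (simp add: is_prob_def sum_distrib_right[symmetric])
  finally show ?thesis .
qed

lemma is_prob_inner_ge:
  assumes "is_prob x" "\<And>i. p \<le> w $ i"
  shows "p \<le> x \<bullet> w"
  using is_prob_inner_le[OF assms(1), of "- w" "- p"] assms(2) by simp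

lemma is_prob_inner_bounds:
  assumes "is_prob x"
  shows "d \<bullet> x \<in> {MIN i. d $ i..MAX i. d $ i}"
  using is_prob_inner_le[OF assms, of d "MAX i. d $ i"] is_prob_inner_ge[OF assms, of "MIN i. d $ i" d]
  by (simp add: inner_commute)

lemma is_prob_inner_eq_bound_on_support:
  assumes x: "is_prob x" and le: "\<And>k. w $ k \<le> p" and eq: "x \<bullet> w = p" and pos: "0 < x $ i"
  shows "w $ i = p"
proof -
  have "(\<Sum>k\<in>UNIV. x$k * (p - w$k)) = p * sum (\<lambda>k. x$k) UNIV - x \<bullet> w"
    by (simp add: inner_vec_def algebra_simps sum_subtractf sum_distrib_left)
  also have "\<dots> = 0" using x eq by (simp add: is_prob_def)
  finally have "x$i * (p - w$i) = 0"
    using x le by (subst (asm) sum_nonneg_eq_0_iff) (auto simp: is_prob_def)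
  with pos show ?thesis by simp
qed

lemma is_prob_support_nonempty:
  assumes "is_prob x"
  obtains i where "0 < x $ i"
proof -
  have "sum (\<lambda>i. x $ i) UNIV \<noteq> 0" using assms by (simp add: is_prob_def)
  then obtain i where "x $ i \<noteq> 0" by (meson sum.not_neutral_contains_not_neutral)
  with assms that show thesis by (metis is_prob_def order_le_less)
qed

lemma is_prob_exists_support_le_inner:
  assumes x: "is_prob x"
  shows "\<exists>i. 0 < x $ i \<and> w $ i \<le> x \<bullet> w"
proof (rule ccontr)
  assume above: "\<not> ?thesis"
  let ?u = "x \<bullet> w"
  obtain i where i: "0 < x $ i" using is_prob_support_nonempty[OF x] .
  have "0 < (\<Sum>k\<in>UNIV. x$k * (w$k - ?u))"
  proof (rule sum_pos2[of UNIV i])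
    show "0 < x$i * (w$i - ?u)" using above i by auto
    show "0 \<le> x$k * (w$k - ?u)" for k
    proof (cases "x$k = 0")
      case False
      with x have "0 < x$k" by (metis is_prob_def order_le_less)
      with above show ?thesis by auto
    qed simp
  qed auto
  also have "(\<Sum>k\<in>UNIV. x$k * (w$k - ?u)) = ?u - ?u * sum (\<lambda>k. x$k) UNIV"
    by (simp add: right_diff_distrib sum_subtractf inner_vec_def sum_distrib_right[symmetric] mult.commute)
  also have "\<dots> = 0" using x by (simp add: is_prob_def)
  finally show False by simp
qed

lemma compact_is_prob: "compact {x::real^'n. is_prob x}"
proof -
  have "{x::real^'n. is_prob x} = (\<Inter>i. {x. 0 \<le> x$i}) \<inter> {x. sum (\<lambda>i. x$i) UNIV = 1}"
    by (auto simp: is_prob_def)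
  moreover have "closed \<dots>"
    by (intro closed_Int closed_INT ballI closed_Collect_eq closed_Collect_le continuous_intros
        continuous_on_component continuous_on_id)
  moreover have "bounded {x::real^'n. is_prob x}"
  proof (rule boundedI[where B=1])
    fix x :: "real^'n" assume "x \<in> {x. is_prob x}"
    then show "norm x \<le> 1" using norm_le_l1_cart[of x] by (simp add: is_prob_def)
  qed
  ultimately show ?thesis by (simp add: compact_eq_bounded_closed)
qed

lemma convex_is_prob: "convex {x::real^'n. is_prob x}"
  unfolding convex_def is_prob_def by (auto simp: sum.distrib sum_distrib_left[symmetric])

lemma is_prob_uniform: "is_prob (\<chi> i. 1 / real CARD('n) :: real^'n)"
  by (simp add: is_prob_def)

text \<open>Nash's map: shift weight towards the coordinates that beat the average payoff
  \<open>x \<bullet> w x\<close>; a Brouwer fixed point is a best reply to itself.\<close>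
lemma exists_is_prob_best_reply_to_itself:
  fixes w :: "real^'n \<Rightarrow> real^'n"
  assumes contw: "continuous_on {x. is_prob x} w"
  shows "\<exists>x. is_prob x \<and> (\<forall>j. w x $ j \<le> x \<bullet> w x)"
proof -
  define S where "S = {x::real^'n. is_prob x}"
  define gain where "gain x = (\<chi> i. max 0 (w x $ i - x \<bullet> w x))" for x
  define total where "total x = sum (\<lambda>j. gain x $ j) UNIV" for x
  define f where "f x = (1 / (1 + total x)) *\<^sub>R (x + gain x)" for x
  have gain_nonneg: "0 \<le> gain x $ i" for x i by (simp add: gain_def)
  have total_nonneg: "0 \<le> total x" for x unfolding total_def by (intro sum_nonneg gain_nonneg)
  have "continuous_on S gain" unfolding gain_def S_def by (intro continuous_intros contw)
  then have contf: "continuous_on S f" unfolding f_def total_def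
    using total_nonneg[unfolded total_def] by (intro continuous_intros) (auto simp: add_nonneg_eq_0_iff)
  have f_comp: "f x $ i = (x $ i + gain x $ i) / (1 + total x)" for x i
    by (simp add: f_def)
  have "f \<in> S \<rightarrow> S"
  proof
    fix x assume "x \<in> S"
    then have x: "is_prob x" by (simp add: S_def)
    have "0 \<le> f x $ i" for i
      using x gain_nonneg total_nonneg[of x] by (simp add: f_comp is_prob_def)
    moreover have "sum (\<lambda>i. f x $ i) UNIV = 1"
      using x total_nonneg[of x]
      by (simp add: f_comp sum_divide_distrib[symmetric] sum.distrib total_def[symmetric] is_prob_def)
    ultimately show "f x \<in> S" by (simp add: S_def is_prob_def)
  qed
  moreover have "compact S" "convex S" "S \<noteq> {}"
    using compact_is_prob convex_is_prob is_prob_uniform by (auto simp: S_def)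
  ultimately obtain x where "x \<in> S" and fixed: "f x = x"
    using brouwer[of S f] contf by blast
  then have x: "is_prob x" by (simp add: S_def)
  obtain i where i: "0 < x $ i" "w x $ i \<le> x \<bullet> w x"
    using is_prob_exists_support_le_inner[OF x] by blast
  have "gain x $ i = 0" using i(2) by (simp add: gain_def)
  then have "x $ i / (1 + total x) = x $ i"
    using fixed f_comp[of x i] by simp
  then have "total x = 0" using i(1) total_nonneg[of x] by (simp add: field_simps)
  then have "gain x $ j = 0" for j
    using gain_nonneg sum_nonneg_eq_0_iff[of UNIV "\<lambda>j. gain x $ j"] by (auto simp: total_def)
  then have "w x $ j \<le> x \<bullet> w x" for j by (metis gain_def max.cobounded2 vec_lambda_beta diff_le_0_iff_le)
  with x show ?thesis by blast
qed

lemma sym_nash_iff_best_reply: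
  "sym_nash A x \<longleftrightarrow> is_prob x \<and> (\<forall>i. (A *v x) $ i \<le> x \<bullet> (A *v x))"
proof
  assume nash: "sym_nash A x"
  then have x: "is_prob x" by (simp add: sym_nash_def)
  define M where "M = (MAX k. (A *v x) $ k)"
  have "x \<bullet> (A *v x) = (\<Sum>k\<in>UNIV. x$k * M)"
    unfolding inner_vec_def inner_real_def
  proof (rule sum.cong[OF refl])
    fix k
    show "x$k * (A *v x)$k = x$k * M"
      using nash x by (cases "x$k = 0") (auto simp: sym_nash_def M_def is_prob_def order_le_less)
  qed
  also have "\<dots> = M" using x by (simp add: is_prob_def sum_distrib_right[symmetric])
  finally show "is_prob x \<and> (\<forall>i. (A *v x) $ i \<le> x \<bullet> (A *v x))"
    using x by (simp add: M_def)
next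
  assume "is_prob x \<and> (\<forall>i. (A *v x) $ i \<le> x \<bullet> (A *v x))"
  then have x: "is_prob x" and le: "\<And>i. (A *v x) $ i \<le> x \<bullet> (A *v x)" by auto
  have "(A *v x) $ i = (MAX k. (A *v x) $ k)" if "0 < x $ i" for i
  proof -
    have "(A *v x) $ i = x \<bullet> (A *v x)"
      using is_prob_inner_eq_bound_on_support[OF x le refl that] .
    with le show ?thesis by (intro Max_eqI[symmetric, OF _ _ rangeI]) auto
  qed
  with x show "sym_nash A x" by (simp add: sym_nash_def)
qed

lemma mult_vec_skew_part:
  "(A - (1/2) *\<^sub>R outer c d) *v x = A *v x - ((d \<bullet> x) / 2) *\<^sub>R c"
  by (simp add: matrix_vector_mult_diff_rdistrib scaleR_matrix_vector_assoc[symmetric] outer_mult_vec)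

lemma inner_mult_vec_skew_part_eq_0:
  assumes "A + transpose A = outer c d"
  shows "x \<bullet> ((A - (1/2) *\<^sub>R outer c d) *v x) = 0"
proof -
  have "x \<bullet> (transpose A *v x) = x \<bullet> (A *v x)"
    by (metis dot_lmul_matrix inner_commute vector_transpose_matrix)
  moreover have "x \<bullet> (A *v x) + x \<bullet> (transpose A *v x) = x \<bullet> ((A + transpose A) *v x)"
    by (simp add: matrix_vector_mult_add_rdistrib inner_add_right)
  moreover have "\<dots> = (d \<bullet> x) * (x \<bullet> c)"
    using assms by (simp add: outer_mult_vec)
  ultimately show ?thesis by (simp add: mult_vec_skew_part inner_diff_right)
qed

lemma lp_feasible_objective_le_0:
  assumes skew: "\<And>x. x \<bullet> (K *v x) = 0" and feas: "lp_feasible K c lam x pp"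
  shows "lam/2 * (x \<bullet> c) \<le> pp"
proof -
  have "x \<bullet> (K *v x + (lam/2) *\<^sub>R c) \<le> pp"
    using feas by (intro is_prob_inner_le) (auto simp: lp_feasible_def)
  with skew[of x] show ?thesis by (simp add: inner_add_right)
qed

lemma lp_objective_0_attained:
  assumes skew: "\<And>x. x \<bullet> (K *v x) = 0"
  shows "\<exists>x. lp_feasible K c lam x (lam/2 * (x \<bullet> c))"
proof -
  have "continuous_on {x. is_prob x} (\<lambda>x. K *v x + (lam/2) *\<^sub>R c)"
    by (intro continuous_intros linear_continuous_on matrix_vector_mul_bounded_linear)
  then obtain x where x: "is_prob x"
    and le: "\<And>j. (K *v x + (lam/2) *\<^sub>R c) $ j \<le> x \<bullet> (K *v x + (lam/2) *\<^sub>R c)"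
    using exists_is_prob_best_reply_to_itself by blast
  have "x \<bullet> (K *v x + (lam/2) *\<^sub>R c) = lam/2 * (x \<bullet> c)"
    using skew[of x] by (simp add: inner_add_right)
  with x le show ?thesis by (auto simp: lp_feasible_def)
qed

lemma lp_optimal_iff:
  assumes skew: "\<And>x. x \<bullet> (K *v x) = 0"
  shows "lp_optimal K c lam x pp \<longleftrightarrow> lp_feasible K c lam x pp \<and> pp = lam/2 * (x \<bullet> c)"
proof -
  obtain x0 where "lp_feasible K c lam x0 (lam/2 * (x0 \<bullet> c))"
    using lp_objective_0_attained[OF skew] by blast
  then have opt_nonneg: "lp_optimal K c lam x pp \<Longrightarrow> 0 \<le> lp_objective c lam x pp"
    by (fastforce simp: lp_optimal_def lp_objective_def)
  have feas_nonpos: "lp_feasible K c lam y rr \<Longrightarrow> lp_objective c lam y rr \<le> 0" for y rr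
    using lp_feasible_objective_le_0[OF skew] by (simp add: lp_objective_def)
  show ?thesis
  proof
    assume opt: "lp_optimal K c lam x pp"
    then have "lp_feasible K c lam x pp" by (simp add: lp_optimal_def)
    with opt_nonneg[OF opt] feas_nonpos[of x pp]
    show "lp_feasible K c lam x pp \<and> pp = lam/2 * (x \<bullet> c)" by (simp add: lp_objective_def)
  next
    assume "lp_feasible K c lam x pp \<and> pp = lam/2 * (x \<bullet> c)"
    moreover from this have "lp_objective c lam x pp = 0" by (simp add: lp_objective_def)
    ultimately show "lp_optimal K c lam x pp" using feas_nonpos by (simp add: lp_optimal_def)
  qed
qed

lemma convex_lp_optimal_points:
  "convex {x::real^'n. lp_feasible K c lam x (lam/2 * (x \<bullet> c))}"
proof -
  have "(K *v x) $ i + lam / 2 * c $ i \<le> lam/2 * (x \<bullet> c) \<longleftrightarrow>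
        (K $ i - (lam/2) *\<^sub>R c) \<bullet> x \<le> - (lam/2 * c $ i)" for x :: "real^'n" and i
    by (simp add: matrix_vector_mul_component inner_diff_left inner_commute[of c]) argo
  then have "{x::real^'n. lp_feasible K c lam x (lam/2 * (x \<bullet> c))} =
      {x. is_prob x} \<inter> (\<Inter>i. {x. (K $ i - (lam/2) *\<^sub>R c) \<bullet> x \<le> - (lam/2 * c $ i)})"
    by (auto simp: lp_feasible_def)
  then show ?thesis by (simp add: convex_Int convex_is_prob convex_INT convex_halfspace_le)
qed

lemma corrF_eq_image:
  assumes skew: "\<And>x. x \<bullet> (K *v x) = 0"
  shows "corrF K c d lam = inner d ` {x. lp_feasible K c lam x (lam/2 * (x \<bullet> c))}"
  unfolding corrF_def lp_optimal_iff[OF skew] by blast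

lemma lp_optimal_at_own_value_iff_sym_nash:
  assumes hA: "A + transpose A = outer c d"
  shows "lp_optimal (A - (1/2) *\<^sub>R outer c d) c (d \<bullet> x) x pp \<longleftrightarrow>
         sym_nash A x \<and> pp = (d \<bullet> x)/2 * (x \<bullet> c)"
proof -
  let ?K = "A - (1/2) *\<^sub>R outer c d"
  have payoff: "(A *v x) $ i = (?K *v x) $ i + (d \<bullet> x)/2 * c $ i" for i
    by (simp add: mult_vec_skew_part)
  have own_payoff: "(d \<bullet> x)/2 * (x \<bullet> c) = x \<bullet> (A *v x)"
    using inner_mult_vec_skew_part_eq_0[OF hA, of x]
    by (simp add: mult_vec_skew_part inner_diff_right)
  then show ?thesis
    unfolding lp_optimal_iff[OF inner_mult_vec_skew_part_eq_0[OF hA]] sym_nash_iff_best_reply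
      lp_feasible_def payoff[symmetric] own_payoff
    by auto
qed

theorem theorem4p5:
  fixes A :: "real^'n^'n" and c d :: "real^'n"
  assumes hA: "A + transpose A = outer c d"
  defines "K \<equiv> A - (1/2) *\<^sub>R outer c d"
      and "dmin \<equiv> (MIN i. d $ i)"
      and "dmax \<equiv> (MAX i. d $ i)"
  shows "(\<forall>lam\<in>{dmin..dmax}. corrF K c d lam \<noteq> {} \<and> convex (corrF K c d lam)
            \<and> corrF K c d lam \<subseteq> {dmin..dmax})
    \<and> (\<forall>lam\<in>{dmin..dmax}. \<forall>x pp. lp_optimal K c lam x pp \<and> d \<bullet> x = lam \<longrightarrow> sym_nash A x)
    \<and> (\<forall>x. sym_nash A x \<longrightarrow> d \<bullet> x \<in> {dmin..dmax} \<and> d \<bullet> x \<in> corrF K c d (d \<bullet> x))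
    \<and> {lam\<in>{dmin..dmax}. lam \<in> corrF K c d lam} = {d \<bullet> x | x. sym_nash A x}"
proof -
  have skew: "\<And>x. x \<bullet> (K *v x) = 0"
    unfolding K_def by (rule inner_mult_vec_skew_part_eq_0[OF hA])
  have bounds: "is_prob x \<Longrightarrow> d \<bullet> x \<in> {dmin..dmax}" for x
    unfolding dmin_def dmax_def by (rule is_prob_inner_bounds)
  have own_value: "lp_optimal K c (d \<bullet> x) x pp \<longleftrightarrow> sym_nash A x \<and> pp = (d \<bullet> x)/2 * (x \<bullet> c)"
    for x pp unfolding K_def by (rule lp_optimal_at_own_value_iff_sym_nash[OF hA])
  have "corrF K c d lam \<noteq> {} \<and> convex (corrF K c d lam) \<and> corrF K c d lam \<subseteq> {dmin..dmax}"
    for lam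
    unfolding corrF_eq_image[OF skew]
  proof (intro conjI)
    show "inner d ` {x. lp_feasible K c lam x (lam/2 * (x \<bullet> c))} \<noteq> {}"
      using lp_objective_0_attained[OF skew] by blast
    show "convex (inner d ` {x. lp_feasible K c lam x (lam/2 * (x \<bullet> c))})"
      by (intro convex_linear_image convex_lp_optimal_points bounded_linear.linear
          bounded_linear_inner_right)
    show "inner d ` {x. lp_feasible K c lam x (lam/2 * (x \<bullet> c))} \<subseteq> {dmin..dmax}"
      using bounds by (auto simp: lp_feasible_def)
  qed
  moreover have "lp_optimal K c (d \<bullet> x) x pp \<Longrightarrow> sym_nash A x" for x pp
    using own_value by blast
  moreover have "sym_nash A x \<Longrightarrow> d \<bullet> x \<in> corrF K c d (d \<bullet> x)" for x
    using own_value unfolding corrF_def by blast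
  moreover have "sym_nash A x \<Longrightarrow> is_prob x" for x by (simp add: sym_nash_def)
  ultimately show ?thesis
    using bounds unfolding corrF_def by blast
qed

end
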